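(* For all $n\ge 2$, $\sum_{i=0}^{n-1} g_i g_{n-1-i}=g_n+f_n$.
   Context: For $x\in S_n$, $\mathrm{ind}_x(a)$ is the position of the value $a$ in $x$, and $\mathrm{small}_{k}(x)$ is the subsequence of $x$ formed by the entries $1,\dots,k$. An occurrence of the bivincular pattern $123^{\star}$ in $x$ is a pair of indices $a<b<n$ with $x_a<x_b$ and $x_{b+1}=x_b+1$. Let $g_n=|\mathrm{Av}_n(132,123^{\star})|$ be the number of permutations in $S_n$ avoiding both the classical pattern $132$ and $123^{\star}$ (with $g_0=1$), and let $f_n$ be the number of $x\in S_n$ avoiding $132$ such that $\mathrm{ind}_x(n)-1=\mathrm{ind}_x(n-1)>1$ and $\mathrm{small}_{n-1}(x)$ avoids $123^{\star}$. *)

theory Defs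
  imports Main
begin

text \<open>Permutations of [n] in one-line notation: lists of length n whose entries are
  exactly 1..n (distinct). List positions are 0-based; the paper's positions are 1-based.\<close>
definition perms :: "nat \<Rightarrow> nat list set" where
  "perms n = {xs. distinct xs \<and> set xs = {1..n}}"

definition contains132 :: "nat list \<Rightarrow> bool" where
  "contains132 xs \<longleftrightarrow> (\<exists>i j k. i < j \<and> j < k \<and> k < length xs \<and>
      xs ! i < xs ! k \<and> xs ! k < xs ! j)"

definition contains123star :: "nat list \<Rightarrow> bool" where
  "contains123star xs \<longleftrightarrow> (\<exists>a b. a < b \<and> Suc b < length xs \<and>
      xs ! a < xs ! b \<and> xs ! Suc b = xs ! b + 1)"

text \<open>1-based position of value v in x.\<close>
definition ind :: "nat list \<Rightarrow> nat \<Rightarrow> nat" where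
  "ind xs v = Suc (LEAST i. i < length xs \<and> xs ! i = v)"

definition small :: "nat \<Rightarrow> nat list \<Rightarrow> nat list" where
  "small k xs = filter (\<lambda>v. v \<le> k) xs"

definition g :: "nat \<Rightarrow> nat" where
  "g n = card {xs \<in> perms n. \<not> contains132 xs \<and> \<not> contains123star xs}"

definition f :: "nat \<Rightarrow> nat" where
  "f n = card {xs \<in> perms n. \<not> contains132 xs \<and>
      ind xs n - 1 = ind xs (n - 1) \<and> ind xs (n - 1) > 1 \<and>
      \<not> contains123star (small (n - 1) xs)}"

end

theory Submission
  imports Defs "HOL-Combinatorics.Multiset_Permutations"
begin

text \<open>A 132-avoiding permutation x of [n] factors uniquely around its maximum as
  x = (L + m) n R with m = n - 1 - k, where L and R are 132-avoiding permutations of [k] and [m]: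
  every entry left of n exceeds every entry right of it. An occurrence of 123* in x then lies
  inside L or inside R, or it is formed by n - 1 immediately followed by n with a smaller entry
  before them, which happens exactly when k \<ge> 2 and L ends with k. Likewise small (n - 1) x =
  (L + m) R avoids 123* iff L and R do. Hence the pairs (L, R) of 123*-avoiders counted by the
  convolution are those giving a 123*-avoiding x, counted by g n, together with those where L
  ends with k \<ge> 2, which give exactly the permutations counted by f n.\<close>

lemma perms_eq_permutations_of_set: "perms n = permutations_of_set {1..n}"
  by (simp add: perms_def permutations_of_set_def conj_commute)

lemma length_perms: "xs \<in> perms n \<Longrightarrow> length xs = n"
  by (simp add: perms_eq_permutations_of_set length_finite_permutations_of_set)

lemma finite_perms: "finite (perms n)"
  by (simp add: perms_eq_permutations_of_set)

lemma ind_nth: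
  assumes "distinct xs" "i < length xs"
  shows "ind xs (xs ! i) = Suc i"
  unfolding ind_def using assms by (auto intro!: Least_equality simp: nth_eq_iff_index_eq)

lemma contains132_map_add: "contains132 (map (\<lambda>v. v + c) xs) \<longleftrightarrow> contains132 xs"
  unfolding contains132_def
  apply (rule iffI; elim exE conjE)
  subgoal for i j k by (rule exI[of _ i], rule exI[of _ j], rule exI[of _ k]) auto
  subgoal for i j k by (rule exI[of _ i], rule exI[of _ j], rule exI[of _ k]) auto
  done

lemma contains123star_map_add: "contains123star (map (\<lambda>v. v + c) xs) \<longleftrightarrow> contains123star xs"
  unfolding contains123star_def
  apply (rule iffI; elim exE conjE)
  subgoal for a b by (rule exI[of _ a], rule exI[of _ b]) auto
  subgoal for a b by (rule exI[of _ a], rule exI[of _ b]) auto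
  done

lemma contains132_appendI1:
  assumes "contains132 xs"
  shows "contains132 (xs @ ys)"
proof -
  obtain i j k where "i < j" "j < k" "k < length xs" "xs ! i < xs ! k" "xs ! k < xs ! j"
    using assms unfolding contains132_def by blast
  then show ?thesis
    unfolding contains132_def by (intro exI[of _ i] exI[of _ j] exI[of _ k]) (auto simp: nth_append)
qed

lemma contains132_appendI2:
  assumes "contains132 ys"
  shows "contains132 (xs @ ys)"
proof -
  obtain i j k where "i < j" "j < k" "k < length ys" "ys ! i < ys ! k" "ys ! k < ys ! j"
    using assms unfolding contains132_def by blast
  then show ?thesis
    unfolding contains132_def
    by (intro exI[of _ "i + length xs"] exI[of _ "j + length xs"] exI[of _ "k + length xs"])
      (auto simp: nth_append)
qed

lemma contains123star_appendI1:
  assumes "contains123star xs"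
  shows "contains123star (xs @ ys)"
proof -
  obtain a b where "a < b" "Suc b < length xs" "xs ! a < xs ! b" "xs ! Suc b = xs ! b + 1"
    using assms unfolding contains123star_def by blast
  then show ?thesis
    unfolding contains123star_def by (intro exI[of _ a] exI[of _ b]) (auto simp: nth_append)
qed

lemma contains123star_appendI2:
  assumes "contains123star ys"
  shows "contains123star (xs @ ys)"
proof -
  obtain a b where "a < b" "Suc b < length ys" "ys ! a < ys ! b" "ys ! Suc b = ys ! b + 1"
    using assms unfolding contains123star_def by blast
  then show ?thesis
    unfolding contains123star_def
    by (intro exI[of _ "a + length xs"] exI[of _ "b + length xs"]) (auto simp: nth_append)
qed

lemma contains132_max_split:
  assumes "\<forall>x\<in>set A. \<forall>y\<in>set B. y < x" "\<forall>x\<in>set A. x < m" "\<forall>y\<in>set B. y < m"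
  shows "contains132 (A @ m # B) \<longleftrightarrow> contains132 A \<or> contains132 B"
proof
  let ?x = "A @ m # B"
  assume "contains132 ?x"
  then obtain i j l where ijl: "i < j" "j < l" "l < length ?x" "?x ! i < ?x ! l" "?x ! l < ?x ! j"
    unfolding contains132_def by blast
  have entry: "p < length A \<and> ?x ! p \<in> set A \<or> p = length A \<and> ?x ! p = m \<or>
      length A < p \<and> ?x ! p \<in> set B" if "p < length ?x" for p
    using that by (auto simp: nth_append nth_Cons')
  \<comment> \<open>m exceeds all other entries, and a 1 taken from A would exceed a 2 taken from B\<close>
  have "l < length A \<or> length A < i"
    using entry[of i] entry[of j] entry[of l] ijl assms by fastforce
  then show "contains132 A \<or> contains132 B"
  proof
    assume "l < length A"
    then have "contains132 A"
      using ijl unfolding contains132_def by (auto simp: nth_append)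
    then show ?thesis ..
  next
    assume "length A < i"
    then have "contains132 B"
      using ijl unfolding contains132_def
      by (intro exI[of _ "i - Suc (length A)"] exI[of _ "j - Suc (length A)"]
          exI[of _ "l - Suc (length A)"]) (auto simp: nth_append)
    then show ?thesis ..
  qed
next
  show "contains132 A \<or> contains132 B \<Longrightarrow> contains132 (A @ m # B)"
    using contains132_appendI1 contains132_appendI2[of B "A @ [m]"] by auto
qed

lemma contains123star_append_above:
  assumes "\<forall>x\<in>set A. \<forall>y\<in>set B. y < x"
  shows "contains123star (A @ B) \<longleftrightarrow> contains123star A \<or> contains123star B"
proof
  let ?x = "A @ B"
  assume "contains123star ?x"
  then obtain a b where ab: "a < b" "Suc b < length ?x" "?x ! a < ?x ! b" "?x ! Suc b = ?x ! b + 1"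
    unfolding contains123star_def by blast
  have entry: "p < length A \<and> ?x ! p \<in> set A \<or> length A \<le> p \<and> ?x ! p \<in> set B"
    if "p < length ?x" for p
    using that by (auto simp: nth_append)
  \<comment> \<open>consecutive values cannot straddle the blocks, and x_a < x_b keeps a in the block of b\<close>
  have "Suc b < length A \<or> length A \<le> a"
    using entry[of a] entry[of b] entry[of "Suc b"] ab assms by fastforce
  then show "contains123star A \<or> contains123star B"
  proof
    assume "Suc b < length A"
    then have "contains123star A"
      using ab unfolding contains123star_def by (auto simp: nth_append)
    then show ?thesis ..
  next
    assume "length A \<le> a"
    then have "contains123star B"
      using ab unfolding contains123star_def
      by (intro exI[of _ "a - length A"] exI[of _ "b - length A"]) (auto simp: nth_append Suc_diff_le)
    then show ?thesis ..
  qed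
next
  show "contains123star A \<or> contains123star B \<Longrightarrow> contains123star (A @ B)"
    using contains123star_appendI1 contains123star_appendI2 by blast
qed

lemma contains123star_snoc_max:
  assumes "distinct A" "\<forall>x\<in>set A. x < m"
  shows "contains123star (A @ [m]) \<longleftrightarrow> contains123star A \<or> (2 \<le> length A \<and> last A + 1 = m)"
proof
  assume "contains123star (A @ [m])"
  then obtain a b where ab: "a < b" "Suc b < Suc (length A)" "(A @ [m]) ! a < (A @ [m]) ! b"
    "(A @ [m]) ! Suc b = (A @ [m]) ! b + 1"
    unfolding contains123star_def by auto
  show "contains123star A \<or> (2 \<le> length A \<and> last A + 1 = m)"
  proof (cases "Suc b < length A")
    case True
    then show ?thesis
      using ab unfolding contains123star_def by (auto simp: nth_append)
  next
    case False
    then have "b = length A - 1" "A \<noteq> []" using ab(1,2) by auto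
    then show ?thesis
      using ab by (auto simp: nth_append last_conv_nth)
  qed
next
  assume "contains123star A \<or> (2 \<le> length A \<and> last A + 1 = m)"
  then show "contains123star (A @ [m])"
  proof
    assume h: "2 \<le> length A \<and> last A + 1 = m"
    then have len: "2 \<le> length A" by simp
    then have "A \<noteq> []" by auto
    then have last: "A ! (length A - 1) + 1 = m" using h by (simp add: last_conv_nth)
    have "A ! 0 \<noteq> A ! (length A - 1)"
      using len assms(1) by (subst nth_eq_iff_index_eq) auto
    moreover have "A ! 0 < m" using \<open>A \<noteq> []\<close> assms(2) by simp
    ultimately have "A ! 0 < A ! (length A - 1)" using last by simp
    then show ?thesis
      using len last unfolding contains123star_def
      by (intro exI[of _ 0] exI[of _ "length A - 1"]) (auto simp: nth_append)
  qed (rule contains123star_appendI1)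
qed

lemma down_closed_eq_atLeastAtMost:
  fixes S :: "nat set"
  assumes "finite S" "0 \<notin> S" "\<And>s v. s \<in> S \<Longrightarrow> 0 < v \<Longrightarrow> v \<le> s \<Longrightarrow> v \<in> S"
  shows "S = {1..card S}"
proof (cases "S = {}")
  case False
  then have "Max S \<in> S" using assms(1) by simp
  have "S \<subseteq> {1..Max S}"
  proof
    fix x assume "x \<in> S"
    moreover have "x \<noteq> 0" using \<open>x \<in> S\<close> assms(2) by (metis)
    ultimately show "x \<in> {1..Max S}" using assms(1) by simp
  qed
  moreover have "{1..Max S} \<subseteq> S" using assms(3)[OF \<open>Max S \<in> S\<close>] by auto
  ultimately have "S = {1..Max S}" by blast
  then show ?thesis by (metis card_atLeastAtMost diff_Suc_1)
qed simp

lemma avoids132_right_le_left: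
  assumes "\<not> contains132 (P @ m # R)" "\<forall>r\<in>set R. r < m" "p \<in> set P" "r \<in> set R"
  shows "r \<le> p"
proof (rule ccontr)
  assume "\<not> r \<le> p"
  obtain i where i: "i < length P" "P ! i = p" using assms(3) by (meson in_set_conv_nth)
  obtain l where l: "l < length R" "R ! l = r" using assms(4) by (meson in_set_conv_nth)
  have "contains132 (P @ m # R)"
    unfolding contains132_def using i l \<open>\<not> r \<le> p\<close> assms(2,4)
    by (intro exI[of _ i] exI[of _ "length P"] exI[of _ "l + Suc (length P)"]) (auto simp: nth_append)
  then show False using assms(1) by contradiction
qed

definition Av132 :: "nat \<Rightarrow> nat list set" where
  "Av132 n = {xs \<in> perms n. \<not> contains132 xs}"

lemma Av132_split_at_max:
  assumes "P @ n # R \<in> Av132 n"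
  shows "set R = {1..length R}" "set P = {length R + 1..n - 1}"
proof -
  have avoid: "\<not> contains132 (P @ n # R)" and dist: "distinct (P @ n # R)"
    and set: "set (P @ n # R) = {1..n}"
    using assms unfolding Av132_def perms_def by auto
  have "set P \<union> set R = set (P @ n # R) - {n}" using dist by auto
  also have "\<dots> = {1..n - 1}" unfolding set by auto
  finally have parts: "set P \<union> set R = {1..n - 1}" .
  have disjoint: "set P \<inter> set R = {}" using dist by auto
  have R_range: "\<forall>r\<in>set R. 0 < r \<and> r < n"
  proof
    fix r assume "r \<in> set R"
    then have "r \<in> {1..n - 1}" using parts by blast
    then show "0 < r \<and> r < n" by auto
  qed
  have below: "r < p" if "p \<in> set P" "r \<in> set R" for p r
  proof -
    have "r \<le> p" using avoids132_right_le_left[OF avoid _ that] R_range by blast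
    moreover have "r \<noteq> p" using disjoint that by blast
    ultimately show ?thesis by simp
  qed
  have "set R = {1..card (set R)}"
  proof (rule down_closed_eq_atLeastAtMost)
    show "0 \<notin> set R" using R_range by blast
    show "v \<in> set R" if "r \<in> set R" "0 < v" "v \<le> r" for r v
    proof -
      have "v \<in> {1..n - 1}" using that R_range by fastforce
      then have "v \<in> set P \<union> set R" using parts by blast
      then show ?thesis using below[of v r] that by auto
    qed
  qed simp
  then show R: "set R = {1..length R}" using dist by (simp add: distinct_card)
  have "set P = (set P \<union> set R) - set R" using disjoint by blast
  also have "\<dots> = {1..n - 1} - {1..length R}" unfolding parts by (simp only: R)
  also have "\<dots> = {length R + 1..n - 1}" by auto
  finally show "set P = {length R + 1..n - 1}" .
qed

lemma finite_Av132: "finite (Av132 n)"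
  unfolding Av132_def using finite_perms by simp

lemma set_map_add_perms: "L \<in> perms k \<Longrightarrow> set (map (\<lambda>v. v + c) L) = {c + 1..c + k}"
  by (simp add: perms_def ac_simps)

definition join_at_max :: "nat \<Rightarrow> nat \<Rightarrow> nat list \<times> nat list \<Rightarrow> nat list" where
  "join_at_max n k LR = map (\<lambda>v. v + (n - 1 - k)) (fst LR) @ n # snd LR"

lemma join_at_max_blocks:
  assumes "k < n" "L \<in> perms k" "R \<in> perms (n - 1 - k)"
  defines "A \<equiv> map (\<lambda>v. v + (n - 1 - k)) L"
  shows "set A = {n - k..n - 1}" "distinct A" "set R = {1..n - 1 - k}" "distinct R"
    and "\<forall>x\<in>set A. \<forall>y\<in>set R. y < x" "\<forall>x\<in>set A. x < n" "\<forall>y\<in>set R. y < n"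
proof -
  have "set A = {n - 1 - k + 1..n - 1 - k + k}"
    unfolding A_def by (rule set_map_add_perms[OF assms(2)])
  moreover have "n - 1 - k + 1 = n - k" "n - 1 - k + k = n - 1" using assms(1) by arith+
  ultimately show A: "set A = {n - k..n - 1}" by simp
  show R: "set R = {1..n - 1 - k}" "distinct R" using assms(3) by (simp_all add: perms_def)
  show "distinct A" using assms(2) by (simp add: A_def perms_def distinct_map inj_on_def)
  show "\<forall>x\<in>set A. \<forall>y\<in>set R. y < x" "\<forall>x\<in>set A. x < n" "\<forall>y\<in>set R. y < n"
    unfolding A R using assms(1) by auto
qed

lemma join_at_max_in_perms:
  assumes "k < n" "L \<in> perms k" "R \<in> perms (n - 1 - k)"
  shows "join_at_max n k (L, R) \<in> perms n"
proof -
  note blocks = join_at_max_blocks[OF assms]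
  let ?A = "map (\<lambda>v. v + (n - 1 - k)) L"
  have "set (?A @ n # R) = {n - k..n - 1} \<union> {n} \<union> {1..n - 1 - k}"
    using blocks(1,3) by auto
  also have "\<dots> = {1..n}" using assms(1) by auto
  finally have "set (?A @ n # R) = {1..n}" .
  moreover have "distinct (?A @ n # R)" using blocks by auto
  ultimately show ?thesis by (simp add: join_at_max_def perms_def)
qed

lemma join_at_max_in_Av132:
  assumes "k < n" "L \<in> Av132 k" "R \<in> Av132 (n - 1 - k)"
  shows "join_at_max n k (L, R) \<in> Av132 n"
proof -
  have perms: "L \<in> perms k" "R \<in> perms (n - 1 - k)" and "\<not> contains132 L" "\<not> contains132 R"
    using assms(2,3) by (simp_all add: Av132_def)
  then have "\<not> contains132 (join_at_max n k (L, R))"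
    using contains132_max_split join_at_max_blocks[OF assms(1) perms]
    by (simp add: join_at_max_def contains132_map_add)
  then show ?thesis using join_at_max_in_perms[OF assms(1) perms] by (simp add: Av132_def)
qed

lemma Av132_decompose:
  assumes "x \<in> Av132 n" "0 < n"
  obtains k L R where "k < n" "L \<in> Av132 k" "R \<in> Av132 (n - 1 - k)" "x = join_at_max n k (L, R)"
proof -
  have "n \<in> set x" using assms unfolding Av132_def perms_def by auto
  then obtain P R where x: "x = P @ n # R" by (meson split_list)
  define k where "k = length P"
  define m where "m = n - 1 - k"
  have "length x = n" using assms(1) unfolding Av132_def by (simp add: length_perms)
  then have k: "k < n" and km: "k + m = n - 1" and lenR: "length R = m"
    unfolding x k_def m_def by auto
  have Px: "P @ n # R \<in> Av132 n" using assms(1) x by simp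
  have setR: "set R = {1..m}" and setP: "set P = {m + 1..n - 1}"
    using Av132_split_at_max[OF Px] lenR by simp_all
  have "\<forall>p\<in>set P. \<forall>r\<in>set R. r < p" "\<forall>p\<in>set P. p < n" "\<forall>r\<in>set R. r < n"
    unfolding setP setR using km by auto
  moreover have "\<not> contains132 (P @ n # R)" "distinct (P @ n # R)"
    using Px unfolding Av132_def perms_def by auto
  ultimately have avoid: "\<not> contains132 P" "\<not> contains132 R" and dist: "distinct P" "distinct R"
    using contains132_max_split[of P R n] by auto
  define L where "L = map (\<lambda>v. v - m) P"
  have "map (\<lambda>v. v - m + m) P = P" by (rule map_idI) (simp add: setP)
  then have P: "P = map (\<lambda>v. v + m) L" by (simp add: L_def comp_def)
  have "(\<lambda>v. v + m) ` set L = set P" by (simp add: P)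
  also have "\<dots> = (\<lambda>v. v + m) ` {1..k}" using km by (simp add: setP ac_simps)
  finally have "set L = {1..k}" by (rule inj_image_eq_iff[THEN iffD1, rotated]) (simp add: inj_def)
  moreover have "distinct L" "\<not> contains132 L"
    using dist(1) avoid(1) by (simp_all add: P distinct_map contains132_map_add)
  ultimately have "L \<in> Av132 k" by (simp add: Av132_def perms_def)
  moreover have "R \<in> Av132 m" using setR dist avoid by (simp add: Av132_def perms_def)
  ultimately show thesis
    using that k unfolding x P join_at_max_def m_def by simp
qed

lemma join_at_max_inj:
  assumes "k < n" "k' < n" "L \<in> perms k" "L' \<in> perms k'" "R \<in> perms (n - 1 - k)"
    and "join_at_max n k (L, R) = join_at_max n k' (L', R')"
  shows "k = k' \<and> L = L' \<and> R = R'"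
proof -
  have "n \<notin> set (map (\<lambda>v. v + (n - 1 - k)) L)" "n \<notin> set R"
    using join_at_max_blocks(6,7)[OF assms(1,3,5)] by blast+
  then have L: "map (\<lambda>v. v + (n - 1 - k)) L = map (\<lambda>v. v + (n - 1 - k')) L'" and "R = R'"
    using assms(6) by (simp_all add: join_at_max_def append_Cons_eq_iff)
  moreover from L have "k = k'" using assms(3,4) by (metis length_map length_perms)
  ultimately show ?thesis by (simp add: inj_map_eq_map)
qed

lemma bij_betw_join_at_max:
  assumes "0 < n"
  shows "bij_betw (\<lambda>(k, LR). join_at_max n k LR)
           (SIGMA k:{..<n}. Av132 k \<times> Av132 (n - 1 - k)) (Av132 n)"
proof (rule bij_betw_imageI)
  show "inj_on (\<lambda>(k, LR). join_at_max n k LR) (SIGMA k:{..<n}. Av132 k \<times> Av132 (n - 1 - k))"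
    using join_at_max_inj by (fastforce simp: inj_on_def Av132_def)
  show "(\<lambda>(k, LR). join_at_max n k LR) ` (SIGMA k:{..<n}. Av132 k \<times> Av132 (n - 1 - k)) = Av132 n"
  proof
    show "Av132 n \<subseteq> (\<lambda>(k, LR). join_at_max n k LR) ` (SIGMA k:{..<n}. Av132 k \<times> Av132 (n - 1 - k))"
    proof
      fix x assume "x \<in> Av132 n"
      then obtain k L R where "k < n" "L \<in> Av132 k" "R \<in> Av132 (n - 1 - k)"
        and "x = join_at_max n k (L, R)" using Av132_decompose assms by blast
      then show "x \<in> (\<lambda>(k, LR). join_at_max n k LR) ` (SIGMA k:{..<n}. Av132 k \<times> Av132 (n - 1 - k))"
        by force
    qed
  qed (auto intro: join_at_max_in_Av132)
qed

lemma card_Av132_filter: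
  assumes "0 < n"
  shows "card {x \<in> Av132 n. Q x} =
    (\<Sum>k<n. card {LR \<in> Av132 k \<times> Av132 (n - 1 - k). Q (join_at_max n k LR)})"
proof -
  let ?S = "SIGMA k:{..<n}. {LR \<in> Av132 k \<times> Av132 (n - 1 - k). Q (join_at_max n k LR)}"
  let ?T = "SIGMA k:{..<n}. Av132 k \<times> Av132 (n - 1 - k)"
  have "bij_betw (\<lambda>(k, LR). join_at_max n k LR)
          {z \<in> ?T. case z of (k, LR) \<Rightarrow> Q (join_at_max n k LR)} {x \<in> Av132 n. Q x}"
    by (rule bij_betw_Collect[OF bij_betw_join_at_max[OF assms]]) auto
  moreover have "{z \<in> ?T. case z of (k, LR) \<Rightarrow> Q (join_at_max n k LR)} = ?S" by auto
  ultimately have "bij_betw (\<lambda>(k, LR). join_at_max n k LR) ?S {x \<in> Av132 n. Q x}" by simp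
  then have "card {x \<in> Av132 n. Q x} = card ?S" by (simp add: bij_betw_same_card)
  also have "\<dots> = (\<Sum>k<n. card {LR \<in> Av132 k \<times> Av132 (n - 1 - k). Q (join_at_max n k LR)})"
    by (simp add: finite_Av132)
  finally show ?thesis .
qed

lemma contains123star_join_at_max:
  assumes "k < n" "L \<in> perms k" "R \<in> perms (n - 1 - k)"
  shows "contains123star (join_at_max n k (L, R)) \<longleftrightarrow>
    contains123star L \<or> contains123star R \<or> (2 \<le> k \<and> last L = k)"
proof -
  let ?A = "map (\<lambda>v. v + (n - 1 - k)) L"
  note blocks = join_at_max_blocks[OF assms]
  have "length L = k" using assms(2) by (rule length_perms)
  have last: "last ?A + 1 = n \<longleftrightarrow> last L = k" if "2 \<le> k"
  proof -
    have "L \<noteq> []" using \<open>length L = k\<close> that by auto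
    then have "last ?A = last L + (n - 1 - k)" by (simp add: last_map)
    then show ?thesis using assms(1) by auto
  qed
  have "join_at_max n k (L, R) = (?A @ [n]) @ R" by (simp add: join_at_max_def)
  then have "contains123star (join_at_max n k (L, R)) \<longleftrightarrow>
      contains123star (?A @ [n]) \<or> contains123star R"
    using contains123star_append_above[of "?A @ [n]" R] blocks by auto
  also have "\<dots> \<longleftrightarrow> contains123star L \<or> (2 \<le> k \<and> last ?A + 1 = n) \<or> contains123star R"
    using contains123star_snoc_max[of ?A n] blocks \<open>length L = k\<close>
    by (simp add: contains123star_map_add)
  finally show ?thesis using last by blast
qed

lemma ind_join_at_max:
  assumes "k < n" "L \<in> perms k" "R \<in> perms (n - 1 - k)"
  shows "ind (join_at_max n k (L, R)) n = Suc k"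
    and "2 \<le> k \<Longrightarrow> ind (join_at_max n k (L, R)) (n - 1) = k \<longleftrightarrow> last L = k"
proof -
  let ?x = "join_at_max n k (L, R)"
  have len: "length L = k" using assms(2) by (rule length_perms)
  have x: "?x = map (\<lambda>v. v + (n - 1 - k)) L @ n # R" by (simp add: join_at_max_def)
  have "?x \<in> perms n" using join_at_max_in_perms[OF assms] .
  then have dist: "distinct ?x" and set: "set ?x = {1..n}" by (simp_all add: perms_def)
  show "ind ?x n = Suc k"
    using ind_nth[OF dist, of k] len by (simp add: x nth_append)
  assume "2 \<le> k"
  then have "n - 1 \<in> set ?x" using assms(1) set by simp
  then obtain i where i: "i < length ?x" "?x ! i = n - 1" by (meson in_set_conv_nth)
  have "L \<noteq> []" using \<open>2 \<le> k\<close> len by auto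
  then have at_k: "?x ! (k - 1) = last L + (n - 1 - k)"
    using \<open>2 \<le> k\<close> len by (simp add: x nth_append last_conv_nth)
  have "k - 1 < length ?x" using len by (simp add: x)
  then have "i = k - 1 \<longleftrightarrow> ?x ! i = ?x ! (k - 1)"
    using nth_eq_iff_index_eq[OF dist i(1)] by simp
  also have "\<dots> \<longleftrightarrow> last L = k" unfolding i(2) at_k using assms(1) by linarith
  finally have "i = k - 1 \<longleftrightarrow> last L = k" .
  moreover have "ind ?x (n - 1) = Suc i" using ind_nth[OF dist i(1)] unfolding i(2) .
  ultimately show "ind ?x (n - 1) = k \<longleftrightarrow> last L = k" using \<open>2 \<le> k\<close> by linarith
qed

lemma contains123star_small_join_at_max:
  assumes "k < n" "L \<in> perms k" "R \<in> perms (n - 1 - k)"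
  shows "contains123star (small (n - 1) (join_at_max n k (L, R))) \<longleftrightarrow>
    contains123star L \<or> contains123star R"
proof -
  let ?A = "map (\<lambda>v. v + (n - 1 - k)) L"
  note blocks = join_at_max_blocks[OF assms]
  have "filter (\<lambda>v. v \<le> n - 1) ?A = ?A" by (rule filter_True) (use blocks(6) in auto)
  moreover have "filter (\<lambda>v. v \<le> n - 1) R = R" by (rule filter_True) (use blocks(7) in auto)
  ultimately have "small (n - 1) (join_at_max n k (L, R)) = ?A @ R"
    using assms(1) by (simp add: small_def join_at_max_def del: filter_map)
  then show ?thesis
    using contains123star_append_above[of ?A R] blocks(5) by (simp add: contains123star_map_add)
qed

definition f_condition :: "nat \<Rightarrow> nat list \<Rightarrow> bool" where
  "f_condition n xs \<longleftrightarrow> ind xs n - 1 = ind xs (n - 1) \<and> ind xs (n - 1) > 1 \<and>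
      \<not> contains123star (small (n - 1) xs)"

lemma f_condition_join_at_max:
  assumes "k < n" "L \<in> perms k" "R \<in> perms (n - 1 - k)"
  shows "f_condition n (join_at_max n k (L, R)) \<longleftrightarrow>
    \<not> contains123star L \<and> \<not> contains123star R \<and> 2 \<le> k \<and> last L = k"
  using ind_join_at_max[OF assms] contains123star_small_join_at_max[OF assms]
  unfolding f_condition_def by auto

lemma g_eq_card_Av132: "g n = card {x \<in> Av132 n. \<not> contains123star x}"
  unfolding g_def Av132_def by (rule arg_cong[where f = card]) auto

lemma f_eq_card_Av132: "f n = card {x \<in> Av132 n. f_condition n x}"
  unfolding f_def f_condition_def Av132_def by (rule arg_cong[where f = card]) auto

lemma g_mult_g_split:
  assumes "k < n"
  shows "g k * g (n - 1 - k) =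
    card {LR \<in> Av132 k \<times> Av132 (n - 1 - k). \<not> contains123star (join_at_max n k LR)} +
    card {LR \<in> Av132 k \<times> Av132 (n - 1 - k). f_condition n (join_at_max n k LR)}"
proof -
  let ?P = "Av132 k \<times> Av132 (n - 1 - k)"
  let ?avoid = "{LR \<in> ?P. \<not> contains123star (join_at_max n k LR)}"
  let ?f = "{LR \<in> ?P. f_condition n (join_at_max n k LR)}"
  have "g k * g (n - 1 - k) =
      card ({L \<in> Av132 k. \<not> contains123star L} \<times> {R \<in> Av132 (n - 1 - k). \<not> contains123star R})"
    by (simp add: g_eq_card_Av132 card_cartesian_product)
  also have "{L \<in> Av132 k. \<not> contains123star L} \<times> {R \<in> Av132 (n - 1 - k). \<not> contains123star R} =
      ?avoid \<union> ?f"
    using contains123star_join_at_max[OF assms] f_condition_join_at_max[OF assms]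
    by (auto simp: Av132_def)
  also have "card (?avoid \<union> ?f) = card ?avoid + card ?f"
  proof (rule card_Un_disjoint)
    show "finite ?avoid" "finite ?f" by (simp_all add: finite_Av132)
    show "?avoid \<inter> ?f = {}"
      using contains123star_join_at_max[OF assms] f_condition_join_at_max[OF assms]
      by (auto simp: Av132_def)
  qed
  finally show ?thesis .
qed

theorem lemma3p20:
  fixes n :: nat
  assumes "n \<ge> 2"
  shows "(\<Sum>i = 0..n-1. g i * g (n - 1 - i)) = g n + f n"
proof -
  have "{0..n - 1} = {..<n}" using assms by auto
  then have "(\<Sum>i = 0..n-1. g i * g (n - 1 - i)) = (\<Sum>k<n. g k * g (n - 1 - k))" by simp
  also have "\<dots> = (\<Sum>k<n.
      card {LR \<in> Av132 k \<times> Av132 (n - 1 - k). \<not> contains123star (join_at_max n k LR)} +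
      card {LR \<in> Av132 k \<times> Av132 (n - 1 - k). f_condition n (join_at_max n k LR)})"
    using g_mult_g_split by simp
  also have "\<dots> = card {x \<in> Av132 n. \<not> contains123star x} + card {x \<in> Av132 n. f_condition n x}"
    using assms by (simp add: sum.distrib card_Av132_filter)
  also have "\<dots> = g n + f n" by (simp add: g_eq_card_Av132 f_eq_card_Av132)
  finally show ?thesis .
qed

end
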